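(* The category $\sigma\mathbb{RS}$ of Dedekind $\sigma$-complete Riesz spaces with $\sigma$-continuous Riesz morphisms is isomorphic to the variety $\mathcal{V}_{\sigma\mathbb{RS}}$: the functor $T\colon\mathcal{V}_{\sigma\mathbb{RS}}\to\sigma\mathbb{RS}$ forgetting $\bigvee^-$ (identity on maps) and the functor $E\colon\sigma\mathbb{RS}\to\mathcal{V}_{\sigma\mathbb{RS}}$ adding $\bigvee^-(g,f_1,f_2,\dots):=\sup_{n\ge1}\{f_n\wedge g\}$ (identity on maps) are well defined and mutually inverse. In particular the category of Dedekind $\sigma$-complete Riesz spaces is an infinitary variety.
   Context: A Riesz space is Dedekind $\sigma$-complete if every countable subset with an upper bound has a supremum; a Riesz morphism (linear lattice homomorphism) is $\sigma$-continuous if it preserves all existing countable suprema. $\mathcal{V}_{\sigma\mathbb{RS}}$ is the infinitary variety of algebras with the Riesz space operations ($0,+,-,\vee,\wedge$ and scalar multiplications $\lambda\cdot-$ for $\lambda\in\mathbb{R}$) plus an operation $\bigvee^-$ of countably infinite arity, writing $\bigvee_{n\ge1}^g f_n:=\bigvee^-(g,f_1,f_2,\dots)$, satisfying the Riesz space axioms and (A1) $\bigvee_{n\ge1}^g f_n=\bigvee_{n\ge1}^g(f_n\wedge g)$; (A2) $\bigvee_{n\ge1}^g f_n=(f_1\wedge g)\vee\bigvee^-(g,f_2,f_3,\dots)$; (A3) $\bigvee_{n\ge1}^g(f_n\wedge h)\le h$ ($a\le b$ meaning $a\wedge b=a$). Morphisms preserve all operations. *)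

theory Defs
  imports Complex_Main "HOL-Library.Countable_Set"
begin

record 'a riesz_struct =
  rcarrier :: "'a set"
  rzero :: 'a
  radd :: "'a \<Rightarrow> 'a \<Rightarrow> 'a"
  rneg :: "'a \<Rightarrow> 'a"
  rjoin :: "'a \<Rightarrow> 'a \<Rightarrow> 'a"
  rmeet :: "'a \<Rightarrow> 'a \<Rightarrow> 'a"
  rscal :: "real \<Rightarrow> 'a \<Rightarrow> 'a"

text \<open>Algebras of the infinitary signature: Riesz operations plus \<open>\<Or>\<^sup>-\<close> of countable arity;
  \<open>vsup A g f\<close> stands for \<open>\<Or>\<^sup>-(g, f 0, f 1, \<dots>)\<close>, i.e. \<open>f n\<close> is the paper's \<open>f_(n+1)\<close>.\<close>
record 'a vsig_struct = "'a riesz_struct" +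
  vsup :: "'a \<Rightarrow> (nat \<Rightarrow> 'a) \<Rightarrow> 'a"

definition rle :: "('a, 'm) riesz_struct_scheme \<Rightarrow> 'a \<Rightarrow> 'a \<Rightarrow> bool" where
  "rle R a b \<longleftrightarrow> rmeet R a b = a"

definition riesz_space :: "('a, 'm) riesz_struct_scheme \<Rightarrow> bool" where
  "riesz_space R \<longleftrightarrow>
    (let C = rcarrier R; add = radd R; z = rzero R; ng = rneg R;
         jn = rjoin R; mt = rmeet R; sc = rscal R in
     z \<in> C \<and>
     (\<forall>x\<in>C. \<forall>y\<in>C. add x y \<in> C \<and> jn x y \<in> C \<and> mt x y \<in> C) \<and>
     (\<forall>x\<in>C. ng x \<in> C \<and> (\<forall>c. sc c x \<in> C)) \<and>
     \<comment> \<open>abelian group\<close>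
     (\<forall>x\<in>C. \<forall>y\<in>C. \<forall>w\<in>C. add (add x y) w = add x (add y w)) \<and>
     (\<forall>x\<in>C. \<forall>y\<in>C. add x y = add y x) \<and>
     (\<forall>x\<in>C. add z x = x) \<and>
     (\<forall>x\<in>C. add (ng x) x = z) \<and>
     \<comment> \<open>real vector space\<close>
     (\<forall>x\<in>C. \<forall>y\<in>C. \<forall>a. sc a (add x y) = add (sc a x) (sc a y)) \<and>
     (\<forall>x\<in>C. \<forall>a b. sc (a + b) x = add (sc a x) (sc b x)) \<and>
     (\<forall>x\<in>C. \<forall>a b. sc a (sc b x) = sc (a * b) x) \<and>
     (\<forall>x\<in>C. sc 1 x = x) \<and>
     \<comment> \<open>lattice\<close>
     (\<forall>x\<in>C. \<forall>y\<in>C. jn x y = jn y x \<and> mt x y = mt y x) \<and>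
     (\<forall>x\<in>C. \<forall>y\<in>C. \<forall>w\<in>C. jn (jn x y) w = jn x (jn y w) \<and> mt (mt x y) w = mt x (mt y w)) \<and>
     (\<forall>x\<in>C. \<forall>y\<in>C. jn x (mt x y) = x \<and> mt x (jn x y) = x) \<and>
     \<comment> \<open>compatibility of order and linear structure\<close>
     (\<forall>x\<in>C. \<forall>y\<in>C. \<forall>w\<in>C. rle R x y \<longrightarrow> rle R (add x w) (add y w)) \<and>
     (\<forall>x\<in>C. \<forall>y\<in>C. \<forall>a. 0 \<le> a \<and> rle R x y \<longrightarrow> rle R (sc a x) (sc a y)))"

definition is_sup :: "('a, 'm) riesz_struct_scheme \<Rightarrow> 'a set \<Rightarrow> 'a \<Rightarrow> bool" where
  "is_sup R S s \<longleftrightarrow> s \<in> rcarrier R \<and> (\<forall>x\<in>S. rle R x s) \<and>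
     (\<forall>u\<in>rcarrier R. (\<forall>x\<in>S. rle R x u) \<longrightarrow> rle R s u)"

definition dedekind_sigma_complete :: "('a, 'm) riesz_struct_scheme \<Rightarrow> bool" where
  "dedekind_sigma_complete R \<longleftrightarrow>
    (\<forall>S. countable S \<and> S \<noteq> {} \<and> S \<subseteq> rcarrier R \<and> (\<exists>u\<in>rcarrier R. \<forall>x\<in>S. rle R x u)
         \<longrightarrow> (\<exists>s. is_sup R S s))"

definition sigma_riesz :: "('a, 'm) riesz_struct_scheme \<Rightarrow> bool" where
  "sigma_riesz R \<longleftrightarrow> riesz_space R \<and> dedekind_sigma_complete R"

definition riesz_hom :: "('a, 'm) riesz_struct_scheme \<Rightarrow> ('b, 'n) riesz_struct_scheme \<Rightarrow> ('a \<Rightarrow> 'b) \<Rightarrow> bool" where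
  "riesz_hom R S h \<longleftrightarrow>
     (\<forall>x\<in>rcarrier R. h x \<in> rcarrier S) \<and>
     h (rzero R) = rzero S \<and>
     (\<forall>x\<in>rcarrier R. \<forall>y\<in>rcarrier R.
        h (radd R x y) = radd S (h x) (h y) \<and>
        h (rjoin R x y) = rjoin S (h x) (h y) \<and>
        h (rmeet R x y) = rmeet S (h x) (h y)) \<and>
     (\<forall>x\<in>rcarrier R. h (rneg R x) = rneg S (h x) \<and> (\<forall>c. h (rscal R c x) = rscal S c (h x)))"

definition sigma_continuous :: "('a, 'm) riesz_struct_scheme \<Rightarrow> ('b, 'n) riesz_struct_scheme \<Rightarrow> ('a \<Rightarrow> 'b) \<Rightarrow> bool" where
  "sigma_continuous R S h \<longleftrightarrow>
     (\<forall>A s. countable A \<and> A \<noteq> {} \<and> A \<subseteq> rcarrier R \<and> is_sup R A s \<longrightarrow> is_sup S (h ` A) (h s))"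

definition sigma_riesz_hom :: "('a, 'm) riesz_struct_scheme \<Rightarrow> ('b, 'n) riesz_struct_scheme \<Rightarrow> ('a \<Rightarrow> 'b) \<Rightarrow> bool" where
  "sigma_riesz_hom R S h \<longleftrightarrow> riesz_hom R S h \<and> sigma_continuous R S h"

definition V_alg :: "'a vsig_struct \<Rightarrow> bool" where
  "V_alg A \<longleftrightarrow> riesz_space A \<and>
    (\<forall>g\<in>rcarrier A. \<forall>f. range f \<subseteq> rcarrier A \<longrightarrow>
       vsup A g f \<in> rcarrier A \<and>
       \<comment> \<open>(A1)\<close>
       vsup A g f = vsup A g (\<lambda>n. rmeet A (f n) g) \<and>
       \<comment> \<open>(A2)\<close>
       vsup A g f = rjoin A (rmeet A (f 0) g) (vsup A g (\<lambda>n. f (Suc n))) \<and>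
       \<comment> \<open>(A3)\<close>
       (\<forall>h\<in>rcarrier A. rle A (vsup A g (\<lambda>n. rmeet A (f n) h)) h))"

definition V_hom :: "'a vsig_struct \<Rightarrow> 'b vsig_struct \<Rightarrow> ('a \<Rightarrow> 'b) \<Rightarrow> bool" where
  "V_hom A B h \<longleftrightarrow> riesz_hom A B h \<and>
     (\<forall>g\<in>rcarrier A. \<forall>f. range f \<subseteq> rcarrier A \<longrightarrow> h (vsup A g f) = vsup B (h g) (h \<circ> f))"

section \<open>The functors (on objects; both are the identity on maps)\<close>

definition T_obj :: "'a vsig_struct \<Rightarrow> 'a riesz_struct" where
  "T_obj A = \<lparr>rcarrier = rcarrier A, rzero = rzero A, radd = radd A, rneg = rneg A,
               rjoin = rjoin A, rmeet = rmeet A, rscal = rscal A\<rparr>"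

definition E_obj :: "'a riesz_struct \<Rightarrow> 'a vsig_struct" where
  "E_obj R = \<lparr>rcarrier = rcarrier R, rzero = rzero R, radd = radd R, rneg = rneg R,
               rjoin = rjoin R, rmeet = rmeet R, rscal = rscal R,
               vsup = (\<lambda>g f. THE s. is_sup R (range (\<lambda>n. rmeet R (f n) g)) s)\<rparr>"

end

theory Submission
  imports Defs
begin

text \<open>Both functors leave the carrier and the Riesz operations untouched, so the whole content
  lies in one observation: in an algebra of the variety, \<open>\<Or>\<^sup>-(g, f\<^sub>1, f\<^sub>2, \<dots>)\<close> is the supremum of
  the \<open>f\<^sub>n \<sqinter> g\<close>. By induction with (A2) it is an upper bound, and (A3) applied to an upper bound
  \<open>u\<close>, together with (A1), shows it lies below \<open>u\<close>. Every countable set bounded by \<open>u\<close> is the set of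
  the \<open>f\<^sub>n \<sqinter> u\<close> for an enumeration \<open>f\<close>, which gives \<open>\<sigma>\<close>-completeness, and since morphisms preserve
  \<open>\<Or>\<^sup>-\<close> they preserve these suprema. Conversely, in a Dedekind \<open>\<sigma>\<close>-complete Riesz space the
  suprema exist and satisfy (A1)-(A3), and \<open>\<sigma>\<close>-continuous morphisms preserve them.\<close>

context
  fixes R :: "('a, 'm) riesz_struct_scheme"
  assumes riesz: "riesz_space R"
begin

lemma rmeet_closed: "x \<in> rcarrier R \<Longrightarrow> y \<in> rcarrier R \<Longrightarrow> rmeet R x y \<in> rcarrier R"
  and rjoin_closed: "x \<in> rcarrier R \<Longrightarrow> y \<in> rcarrier R \<Longrightarrow> rjoin R x y \<in> rcarrier R"
  and rmeet_commute: "x \<in> rcarrier R \<Longrightarrow> y \<in> rcarrier R \<Longrightarrow> rmeet R x y = rmeet R y x"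
  and rjoin_commute: "x \<in> rcarrier R \<Longrightarrow> y \<in> rcarrier R \<Longrightarrow> rjoin R x y = rjoin R y x"
  and rmeet_assoc: "x \<in> rcarrier R \<Longrightarrow> y \<in> rcarrier R \<Longrightarrow> z \<in> rcarrier R \<Longrightarrow>
    rmeet R (rmeet R x y) z = rmeet R x (rmeet R y z)"
  and rjoin_assoc: "x \<in> rcarrier R \<Longrightarrow> y \<in> rcarrier R \<Longrightarrow> z \<in> rcarrier R \<Longrightarrow>
    rjoin R (rjoin R x y) z = rjoin R x (rjoin R y z)"
  and rjoin_rmeet_absorb: "x \<in> rcarrier R \<Longrightarrow> y \<in> rcarrier R \<Longrightarrow> rjoin R x (rmeet R x y) = x"
  and rmeet_rjoin_absorb: "x \<in> rcarrier R \<Longrightarrow> y \<in> rcarrier R \<Longrightarrow> rmeet R x (rjoin R x y) = x"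
  using riesz unfolding riesz_space_def Let_def by auto

lemma rmeet_idem: "x \<in> rcarrier R \<Longrightarrow> rmeet R x x = x"
  by (metis rjoin_rmeet_absorb rmeet_rjoin_absorb rmeet_closed)

lemma rle_antisym: "x \<in> rcarrier R \<Longrightarrow> y \<in> rcarrier R \<Longrightarrow> rle R x y \<Longrightarrow> rle R y x \<Longrightarrow> x = y"
  unfolding rle_def by (metis rmeet_commute)

lemma rle_trans:
  "x \<in> rcarrier R \<Longrightarrow> y \<in> rcarrier R \<Longrightarrow> z \<in> rcarrier R \<Longrightarrow> rle R x y \<Longrightarrow> rle R y z \<Longrightarrow> rle R x z"
  unfolding rle_def by (metis rmeet_assoc)

lemma rmeet_le_right: "x \<in> rcarrier R \<Longrightarrow> y \<in> rcarrier R \<Longrightarrow> rle R (rmeet R x y) y"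
  unfolding rle_def by (metis rmeet_assoc rmeet_idem)

lemma rmeet_le_left: "x \<in> rcarrier R \<Longrightarrow> y \<in> rcarrier R \<Longrightarrow> rle R (rmeet R x y) x"
  by (metis rmeet_commute rmeet_le_right)

lemma rjoin_ge_left: "x \<in> rcarrier R \<Longrightarrow> y \<in> rcarrier R \<Longrightarrow> rle R x (rjoin R x y)"
  unfolding rle_def by (metis rmeet_rjoin_absorb)

lemma rjoin_ge_right: "x \<in> rcarrier R \<Longrightarrow> y \<in> rcarrier R \<Longrightarrow> rle R y (rjoin R x y)"
  by (metis rjoin_commute rjoin_ge_left)

lemma rjoin_least:
  assumes "x \<in> rcarrier R" "y \<in> rcarrier R" "z \<in> rcarrier R" "rle R x z" "rle R y z"
  shows "rle R (rjoin R x y) z"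
proof -
  have "rjoin R y z = z" "rjoin R x z = z"
    using assms unfolding rle_def by (metis rjoin_rmeet_absorb rjoin_commute rmeet_commute)+
  then have "rjoin R (rjoin R x y) z = z"
    using assms by (simp add: rjoin_assoc)
  then show ?thesis
    unfolding rle_def using assms by (metis rmeet_rjoin_absorb rjoin_closed)
qed

lemma is_sup_unique: "is_sup R S a \<Longrightarrow> is_sup R S b \<Longrightarrow> a = b"
  unfolding is_sup_def by (meson rle_antisym)

lemma is_sup_insert:
  assumes a: "a \<in> rcarrier R" and S: "S \<subseteq> rcarrier R" and t: "is_sup R S t"
  shows "is_sup R (insert a S) (rjoin R a t)"
proof -
  have tC: "t \<in> rcarrier R" using t by (simp add: is_sup_def)
  have "rle R x (rjoin R a t)" if "x \<in> S" for x
    using that S t a tC rle_trans[OF _ tC _ _ rjoin_ge_right[OF a tC]]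
    unfolding is_sup_def by (meson rjoin_closed subsetD)
  then show ?thesis
    using a t tC unfolding is_sup_def by (auto intro: rjoin_closed rjoin_ge_left rjoin_least)
qed

end

lemma T_obj_simps [simp]:
  "rcarrier (T_obj A) = rcarrier A" "rmeet (T_obj A) = rmeet A" "rjoin (T_obj A) = rjoin A"
  by (simp_all add: T_obj_def)

lemma E_obj_simps [simp]:
  "rcarrier (E_obj R) = rcarrier R" "rmeet (E_obj R) = rmeet R" "rjoin (E_obj R) = rjoin R"
  by (simp_all add: E_obj_def)

lemma is_sup_T_obj [simp]: "is_sup (T_obj A) = is_sup A"
  and riesz_space_T_obj [simp]: "riesz_space (T_obj A) = riesz_space A"
  and riesz_hom_T_obj [simp]: "riesz_hom (T_obj A) (T_obj B) h = riesz_hom A B h"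
  and dedekind_sigma_complete_T_obj [simp]:
    "dedekind_sigma_complete (T_obj A) = dedekind_sigma_complete A"
  and sigma_continuous_T_obj [simp]:
    "sigma_continuous (T_obj A) (T_obj B) h = sigma_continuous A B h"
  by (simp_all add: T_obj_def fun_eq_iff rle_def is_sup_def riesz_space_def
      dedekind_sigma_complete_def riesz_hom_def sigma_continuous_def)

lemma rle_E_obj [simp]: "rle (E_obj R) = rle R"
  and riesz_space_E_obj [simp]: "riesz_space (E_obj R) = riesz_space R"
  and riesz_hom_E_obj [simp]: "riesz_hom (E_obj R) (E_obj S) h = riesz_hom R S h"
  by (simp_all add: E_obj_def fun_eq_iff rle_def riesz_space_def riesz_hom_def)

lemma range_eq_insert_range_Suc: "range f = insert (f 0) (range (\<lambda>n. f (Suc n)))"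
  by (auto simp: image_iff) (metis not0_implies_Suc)

lemma riesz_hom_image_range_meet:
  assumes "riesz_hom R S h" "g \<in> rcarrier R" "range f \<subseteq> rcarrier R"
  shows "h ` range (\<lambda>n. rmeet R (f n) g) = range (\<lambda>n. rmeet S (h (f n)) (h g))"
proof -
  have "h (rmeet R (f n) g) = rmeet S (h (f n)) (h g)" for n
    using assms by (auto simp: riesz_hom_def)
  then show ?thesis by (simp add: image_image)
qed

lemma V_alg_riesz_space: "V_alg A \<Longrightarrow> riesz_space A"
  by (simp add: V_alg_def)

lemma V_algD:
  assumes "V_alg A" "g \<in> rcarrier A" "range f \<subseteq> rcarrier A"
  shows vsup_closed: "vsup A g f \<in> rcarrier A"
    and vsup_meet_eq: "vsup A g f = vsup A g (\<lambda>n. rmeet A (f n) g)"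
    and vsup_unfold: "vsup A g f = rjoin A (rmeet A (f 0) g) (vsup A g (\<lambda>n. f (Suc n)))"
    and vsup_meet_le: "h \<in> rcarrier A \<Longrightarrow> rle A (vsup A g (\<lambda>n. rmeet A (f n) h)) h"
  using assms unfolding V_alg_def by blast+

lemma vsup_ge_head_tail:
  assumes V: "V_alg A" and g: "g \<in> rcarrier A" and f: "range f \<subseteq> rcarrier A"
  shows "rle A (rmeet A (f 0) g) (vsup A g f)"
    and "rle A (vsup A g (\<lambda>n. f (Suc n))) (vsup A g f)"
proof -
  have RS: "riesz_space A" using V by (rule V_alg_riesz_space)
  have "rmeet A (f 0) g \<in> rcarrier A" using f g RS by (auto intro: rmeet_closed)
  moreover have "vsup A g (\<lambda>n. f (Suc n)) \<in> rcarrier A" using f by (auto intro: vsup_closed V g)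
  ultimately show "rle A (rmeet A (f 0) g) (vsup A g f)"
    and "rle A (vsup A g (\<lambda>n. f (Suc n))) (vsup A g f)"
    unfolding vsup_unfold[OF V g f] using RS by (simp_all add: rjoin_ge_left rjoin_ge_right)
qed

lemma vsup_upper:
  assumes V: "V_alg A" and g: "g \<in> rcarrier A" and f: "range f \<subseteq> rcarrier A"
  shows "rle A (rmeet A (f n) g) (vsup A g f)"
  using f
proof (induction n arbitrary: f)
  case 0
  then show ?case by (rule vsup_ge_head_tail[OF V g])
next
  case (Suc n)
  have tail: "range (\<lambda>n. f (Suc n)) \<subseteq> rcarrier A" using Suc.prems by auto
  have "f (Suc n) \<in> rcarrier A" using Suc.prems by auto
  then show ?case
    using Suc.IH[OF tail] vsup_ge_head_tail(2)[OF V g Suc.prems] V_alg_riesz_space[OF V] g tail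
      Suc.prems
    by (meson rle_trans rmeet_closed vsup_closed V)
qed

lemma vsup_is_sup:
  assumes V: "V_alg A" and g: "g \<in> rcarrier A" and f: "range f \<subseteq> rcarrier A"
  shows "is_sup A (range (\<lambda>n. rmeet A (f n) g)) (vsup A g f)"
proof -
  have meets: "range (\<lambda>n. rmeet A (f n) g) \<subseteq> rcarrier A"
    using V g f by (auto intro: rmeet_closed V_alg_riesz_space)
  have "rle A (vsup A g f) u"
    if u: "u \<in> rcarrier A" and ub: "\<forall>n. rle A (rmeet A (f n) g) u" for u
  proof -
    have "(\<lambda>n. rmeet A (rmeet A (f n) g) u) = (\<lambda>n. rmeet A (f n) g)"
      using ub by (simp add: rle_def)
    then show ?thesis
      using vsup_meet_le[OF V g meets u] vsup_meet_eq[OF V g f] by simp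
  qed
  then show ?thesis
    unfolding is_sup_def using vsup_closed[OF V g f] vsup_upper[OF V g f] by auto
qed

lemma vsup_enumeration_is_sup:
  assumes V: "V_alg A" and S: "countable S" "S \<noteq> {}" "S \<subseteq> rcarrier A"
    and u: "u \<in> rcarrier A" "\<forall>x\<in>S. rle A x u"
  shows "is_sup A S (vsup A u (from_nat_into S))"
proof -
  have "range (\<lambda>n. rmeet A (from_nat_into S n) u) = S"
    using S u by (simp add: rle_def from_nat_into)
  moreover have "range (from_nat_into S) \<subseteq> rcarrier A"
    using S by simp
  ultimately show ?thesis
    using vsup_is_sup[OF V u(1)] by metis
qed

lemma T_obj_sigma_riesz:
  assumes V: "V_alg A"
  shows "sigma_riesz (T_obj A)"
proof -
  have "dedekind_sigma_complete A"
    unfolding dedekind_sigma_complete_def using vsup_enumeration_is_sup[OF V] by blast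
  then show ?thesis
    using V_alg_riesz_space[OF V] by (simp add: sigma_riesz_def)
qed

lemma V_hom_sigma_riesz_hom:
  assumes VA: "V_alg A" and VB: "V_alg B" and h: "V_hom A B h"
  shows "sigma_riesz_hom (T_obj A) (T_obj B) h"
proof -
  have hom: "riesz_hom A B h"
    and h_vsup: "\<And>g f. g \<in> rcarrier A \<Longrightarrow> range f \<subseteq> rcarrier A \<Longrightarrow>
      h (vsup A g f) = vsup B (h g) (h \<circ> f)"
    using h by (auto simp: V_hom_def)
  have "sigma_continuous A B h"
    unfolding sigma_continuous_def
  proof (intro allI impI, elim conjE)
    fix X s assume X: "countable X" "X \<noteq> {}" "X \<subseteq> rcarrier A" and s: "is_sup A X s"
    define f where "f = from_nat_into X"
    have sC: "s \<in> rcarrier A" and f: "range f \<subseteq> rcarrier A"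
      using s X by (auto simp: is_sup_def f_def)
    have meets: "range (\<lambda>n. rmeet A (f n) s) = X"
      using X s by (simp add: f_def is_sup_def rle_def from_nat_into)
    have "vsup A s f = s"
      using vsup_is_sup[OF VA sC f] s is_sup_unique[OF V_alg_riesz_space[OF VA]]
      unfolding meets by blast
    then have "vsup B (h s) (h \<circ> f) = h s"
      using h_vsup[OF sC f] by simp
    moreover have "range (h \<circ> f) \<subseteq> rcarrier B" "h s \<in> rcarrier B"
      using hom f sC by (auto simp: riesz_hom_def)
    ultimately show "is_sup B (h ` X) (h s)"
      using vsup_is_sup[OF VB, of "h s" "h \<circ> f"]
        riesz_hom_image_range_meet[OF hom sC f] meets by simp
  qed
  then show ?thesis
    using hom by (simp add: sigma_riesz_hom_def)
qed

lemma vsup_E_obj_eqI: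
  assumes "riesz_space R" "is_sup R (range (\<lambda>n. rmeet R (f n) g)) s"
  shows "vsup (E_obj R) g f = s"
proof -
  have "(THE s. is_sup R (range (\<lambda>n. rmeet R (f n) g)) s) = s"
    using assms by (blast intro: the_equality is_sup_unique)
  then show ?thesis by (simp add: E_obj_def)
qed

lemma vsup_E_obj_is_sup:
  assumes S: "sigma_riesz R" and g: "g \<in> rcarrier R" and f: "range f \<subseteq> rcarrier R"
  shows "is_sup R (range (\<lambda>n. rmeet R (f n) g)) (vsup (E_obj R) g f)"
proof -
  have RS: "riesz_space R" and complete: "dedekind_sigma_complete R"
    using S by (simp_all add: sigma_riesz_def)
  let ?M = "range (\<lambda>n. rmeet R (f n) g)"
  have "?M \<subseteq> rcarrier R" "\<forall>x\<in>?M. rle R x g"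
    using f g RS by (auto intro: rmeet_closed rmeet_le_right)
  moreover have "countable ?M" "?M \<noteq> {}"
    by simp_all
  ultimately obtain s where "is_sup R ?M s"
    using complete g unfolding dedekind_sigma_complete_def by meson
  then show ?thesis
    using vsup_E_obj_eqI[OF RS] by simp
qed

lemma E_obj_V_alg:
  assumes S: "sigma_riesz R"
  shows "V_alg (E_obj R)"
proof -
  have RS: "riesz_space R" using S by (simp add: sigma_riesz_def)
  have "vsup (E_obj R) g f \<in> rcarrier R \<and>
      vsup (E_obj R) g f = vsup (E_obj R) g (\<lambda>n. rmeet R (f n) g) \<and>
      vsup (E_obj R) g f = rjoin R (rmeet R (f 0) g) (vsup (E_obj R) g (\<lambda>n. f (Suc n))) \<and>
      (\<forall>h\<in>rcarrier R. rle R (vsup (E_obj R) g (\<lambda>n. rmeet R (f n) h)) h)"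
    if g: "g \<in> rcarrier R" and f: "range f \<subseteq> rcarrier R" for g f
  proof (intro conjI ballI)
    have sup: "is_sup R (range (\<lambda>n. rmeet R (f n) g)) (vsup (E_obj R) g f)"
      using vsup_E_obj_is_sup[OF S g f] .
    then show "vsup (E_obj R) g f \<in> rcarrier R"
      by (simp add: is_sup_def)
    have "rmeet R (rmeet R (f n) g) g = rmeet R (f n) g" for n
      using rmeet_le_right[OF RS, of "f n" g] f g unfolding rle_def by auto
    then show "vsup (E_obj R) g f = vsup (E_obj R) g (\<lambda>n. rmeet R (f n) g)"
      by (simp add: E_obj_def)
    have tail: "range (\<lambda>n. f (Suc n)) \<subseteq> rcarrier R" using f by auto
    have "rmeet R (f 0) g \<in> rcarrier R" "range (\<lambda>n. rmeet R (f (Suc n)) g) \<subseteq> rcarrier R"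
      using f g RS by (auto intro: rmeet_closed)
    then have "is_sup R (range (\<lambda>n. rmeet R (f n) g))
        (rjoin R (rmeet R (f 0) g) (vsup (E_obj R) g (\<lambda>n. f (Suc n))))"
      using is_sup_insert[OF RS _ _ vsup_E_obj_is_sup[OF S g tail]]
        range_eq_insert_range_Suc[of "\<lambda>n. rmeet R (f n) g"]
      by simp
    then show "vsup (E_obj R) g f = rjoin R (rmeet R (f 0) g) (vsup (E_obj R) g (\<lambda>n. f (Suc n)))"
      using sup is_sup_unique[OF RS] by blast
  next
    fix h assume h: "h \<in> rcarrier R"
    have meets: "range (\<lambda>n. rmeet R (f n) h) \<subseteq> rcarrier R"
      using f h RS by (auto intro: rmeet_closed)
    have "rle R (rmeet R (rmeet R (f n) h) g) h" for n
      using f g h RS rle_trans[OF RS _ _ h rmeet_le_left rmeet_le_right]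
      by (meson rangeI rmeet_closed subsetD)
    then show "rle R (vsup (E_obj R) g (\<lambda>n. rmeet R (f n) h)) h"
      using vsup_E_obj_is_sup[OF S g meets] h unfolding is_sup_def by blast
  qed
  then show ?thesis
    unfolding V_alg_def E_obj_simps riesz_space_E_obj rle_E_obj using RS by blast
qed

lemma sigma_riesz_hom_V_hom:
  assumes R: "sigma_riesz R" and S: "sigma_riesz S" and h: "sigma_riesz_hom R S h"
  shows "V_hom (E_obj R) (E_obj S) h"
proof -
  have hom: "riesz_hom R S h" and cont: "sigma_continuous R S h"
    using h by (simp_all add: sigma_riesz_hom_def)
  have "h (vsup (E_obj R) g f) = vsup (E_obj S) (h g) (h \<circ> f)"
    if g: "g \<in> rcarrier R" and f: "range f \<subseteq> rcarrier R" for g f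
  proof (rule sym, rule vsup_E_obj_eqI)
    show "riesz_space S" using S by (simp add: sigma_riesz_def)
    have "range (\<lambda>n. rmeet R (f n) g) \<subseteq> rcarrier R"
      using R f g by (auto simp: sigma_riesz_def intro: rmeet_closed)
    then have "is_sup S (h ` range (\<lambda>n. rmeet R (f n) g)) (h (vsup (E_obj R) g f))"
      using cont vsup_E_obj_is_sup[OF R g f] unfolding sigma_continuous_def by simp
    then show "is_sup S (range (\<lambda>n. rmeet S ((h \<circ> f) n) (h g))) (h (vsup (E_obj R) g f))"
      using riesz_hom_image_range_meet[OF hom g f] by simp
  qed
  then show ?thesis
    using hom by (simp add: V_hom_def)
qed

lemma vsup_E_obj_T_obj:
  assumes V: "V_alg A" and g: "g \<in> rcarrier A" and f: "range f \<subseteq> rcarrier A"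
  shows "vsup (E_obj (T_obj A)) g f = vsup A g f"
  using vsup_E_obj_eqI[of "T_obj A"] vsup_is_sup[OF V g f] V_alg_riesz_space[OF V] by simp

theorem mainTheorem3:
  shows
   \<comment> \<open>T well defined on objects and maps\<close>
   "(\<forall>A :: 'a vsig_struct. V_alg A \<longrightarrow> sigma_riesz (T_obj A)) \<and>
    (\<forall>(A :: 'a vsig_struct) (B :: 'b vsig_struct) h.
        V_alg A \<and> V_alg B \<and> V_hom A B h \<longrightarrow> sigma_riesz_hom (T_obj A) (T_obj B) h) \<and>
    \<comment> \<open>E well defined on objects and maps\<close>
    (\<forall>R :: 'a riesz_struct. sigma_riesz R \<longrightarrow> V_alg (E_obj R)) \<and>
    (\<forall>(R :: 'a riesz_struct) (S :: 'b riesz_struct) h.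
        sigma_riesz R \<and> sigma_riesz S \<and> sigma_riesz_hom R S h \<longrightarrow> V_hom (E_obj R) (E_obj S) h) \<and>
    \<comment> \<open>mutually inverse\<close>
    (\<forall>R :: 'a riesz_struct. sigma_riesz R \<longrightarrow> T_obj (E_obj R) = R) \<and>
    (\<forall>A :: 'a vsig_struct. V_alg A \<longrightarrow>
        T_obj (E_obj (T_obj A)) = T_obj A \<and>
        (\<forall>g\<in>rcarrier A. \<forall>f. range f \<subseteq> rcarrier A \<longrightarrow> vsup (E_obj (T_obj A)) g f = vsup A g f))"
  using T_obj_sigma_riesz V_hom_sigma_riesz_hom E_obj_V_alg sigma_riesz_hom_V_hom
    vsup_E_obj_T_obj
  by (auto simp: T_obj_def E_obj_def)

end
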